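(* Let $(\mathcal V,\mathcal W,\lambda)$ be a FTvN system where $\mathcal V$ is a Hilbert space, and let $C$ denote its center. Then: (a) $\mathcal V=C+C^\perp$. (b) $(C,\mathcal W,\lambda|_C)$ is a FTvN system whose center is $C$ (so any two elements in this system commute). (c) $(C^\perp,\mathcal W,\lambda|_{C^\perp})$ is a FTvN system whose center is $\{0\}$.
   Context: A Fan-Theobald-von Neumann (FTvN) system is a triple $(\mathcal V,\mathcal W,\lambda)$ where $\mathcal V,\mathcal W$ are real inner product spaces and $\lambda:\mathcal V\to\mathcal W$ is a map such that: (A1) $\|\lambda(x)\|=\|x\|$ for all $x$; (A2) $\langle x,y\rangle\le\langle\lambda(x),\lambda(y)\rangle$ for all $x,y$; (A3) for every $c\in\mathcal V$ and $q\in\lambda(\mathcal V)$ there exists $x$ with $\lambda(x)=q$ and $\langle c,x\rangle=\langle\lambda(c),\lambda(x)\rangle$. Elements $x,y$ commute if $\langle x,y\rangle=\langle\lambda(x),\lambda(y)\rangle$; the center of a FTvN system is the set of elements commuting with every element of the underlying space. Subspaces carry the restricted inner product. *)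

theory Defs
  imports "HOL-Analysis.Analysis"
begin

text \<open>A FTvN system (S, W, lam restricted to S), where S is a linear subspace of the
  real inner product space 'v carrying the restricted inner product, and W is the type 'w.\<close>
definition ftvn :: "'v::real_inner set \<Rightarrow> ('v \<Rightarrow> 'w::real_inner) \<Rightarrow> bool" where
  "ftvn S lam \<longleftrightarrow> subspace S
     \<and> (\<forall>x\<in>S. norm (lam x) = norm x)
     \<and> (\<forall>x\<in>S. \<forall>y\<in>S. x \<bullet> y \<le> lam x \<bullet> lam y)
     \<and> (\<forall>c\<in>S. \<forall>q\<in>lam ` S. \<exists>x\<in>S. lam x = q \<and> c \<bullet> x = lam c \<bullet> lam x)"

definition ftvn_commute :: "('v::real_inner \<Rightarrow> 'w::real_inner) \<Rightarrow> 'v \<Rightarrow> 'v \<Rightarrow> bool" where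
  "ftvn_commute lam x y \<longleftrightarrow> x \<bullet> y = lam x \<bullet> lam y"

definition ftvn_center :: "'v::real_inner set \<Rightarrow> ('v \<Rightarrow> 'w::real_inner) \<Rightarrow> 'v set" where
  "ftvn_center S lam = {x\<in>S. \<forall>y\<in>S. ftvn_commute lam x y}"

end

theory Submission
  imports Defs
begin

text \<open>For a central element c, expanding norm (lam (x + t c) - lam x - t lam c)^2 and using
  (A1), (A2) and centrality bounds it by norm ((x + t c) - x - t c)^2 = 0, so lam is additive
  along the center. Hence the center C is a subspace, closed because lam is 1-Lipschitz, and
  the projection theorem gives V = C + C^perp. Both C and C^perp are closed under taking
  lam-preimages, which is all that (A3) needs in order to restrict: lam x = lam c with c
  central forces x = c, and if lam x = lam z with z in C^perp, the C-component c of x satisfies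
  norm c^2 = <c, x> = <lam c, lam z> = <c, z> = 0. Finally, an element of C^perp commuting with
  all of C^perp commutes with all of V by additivity along C, so it lies in C and is 0.\<close>

lemma parallelogram_law:
  fixes x y :: "'a::real_inner"
  shows "(norm (x + y))\<^sup>2 + (norm (x - y))\<^sup>2 = 2 * (norm x)\<^sup>2 + 2 * (norm y)\<^sup>2"
  by (simp add: power2_norm_eq_inner inner_add_left inner_add_right inner_diff_left
      inner_diff_right inner_commute)

lemma convex_nearest_point_exists:
  fixes S :: "'a::{real_inner,complete_space} set"
  assumes "closed S" and "convex S" and "S \<noteq> {}"
  obtains s where "s \<in> S" and "\<And>y. y \<in> S \<Longrightarrow> norm (x - s) \<le> norm (x - y)"
proof -
  define d where "d = (INF y\<in>S. (norm (x - y))\<^sup>2)"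
  have bdd: "bdd_below ((\<lambda>y. (norm (x - y))\<^sup>2) ` S)"
    by (rule bdd_belowI2[of _ 0]) simp
  have d_le: "d \<le> (norm (x - y))\<^sup>2" if "y \<in> S" for y
    unfolding d_def using bdd that by (rule cINF_lower)
  have "\<exists>y\<in>S. (norm (x - y))\<^sup>2 < d + inverse (real (Suc n))" for n
    using cINF_less_iff[OF \<open>S \<noteq> {}\<close> bdd, of "d + inverse (real (Suc n))"]
    by (simp add: d_def)
  then obtain f where f_in: "\<And>n. f n \<in> S"
    and f_close: "\<And>n. (norm (x - f n))\<^sup>2 < d + inverse (real (Suc n))"
    by metis
  have f_near: "(norm (f m - f n))\<^sup>2 \<le> 2 * inverse (real (Suc m)) + 2 * inverse (real (Suc n))"
    for m n
  proof -
    have "(1/2) *\<^sub>R f m + (1/2) *\<^sub>R f n \<in> S"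
      using convexD[OF \<open>convex S\<close> f_in f_in] by simp
    from d_le[OF this] have "4 * d \<le> (norm ((x - f m) + (x - f n)))\<^sup>2"
      by (simp add: power2_norm_eq_inner inner_add_left inner_add_right inner_diff_left
          inner_diff_right inner_commute algebra_simps)
    with parallelogram_law[of "x - f m" "x - f n"] f_close[of m] f_close[of n]
    show ?thesis by (simp add: norm_minus_commute)
  qed
  have "Cauchy f"
  proof (rule CauchyI)
    fix e :: real assume "0 < e"
    then obtain M where M: "inverse (real (Suc M)) < e\<^sup>2 / 4"
      using reals_Archimedean[of "e\<^sup>2 / 4"] by auto
    have "norm (f m - f n) < e" if "M \<le> m" "M \<le> n" for m n
    proof -
      have "inverse (real (Suc m)) \<le> inverse (real (Suc M))"
        "inverse (real (Suc n)) \<le> inverse (real (Suc M))"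
        using that by (simp_all add: le_imp_inverse_le)
      with f_near[of m n] M have "(norm (f m - f n))\<^sup>2 < e\<^sup>2" by linarith
      with \<open>0 < e\<close> show ?thesis by (simp add: power2_less_imp_less)
    qed
    then show "\<exists>M. \<forall>m\<ge>M. \<forall>n\<ge>M. norm (f m - f n) < e" by blast
  qed
  then obtain s where f_lim: "f \<longlonglongrightarrow> s"
    using convergent_eq_Cauchy by blast
  have "s \<in> S"
    using closed_sequentially[OF \<open>closed S\<close> f_in f_lim] .
  have "(norm (x - s))\<^sup>2 \<le> d + 0"
  proof (rule LIMSEQ_le)
    show "(\<lambda>n. (norm (x - f n))\<^sup>2) \<longlonglongrightarrow> (norm (x - s))\<^sup>2"
      by (intro tendsto_intros f_lim)
    show "(\<lambda>n. d + inverse (real (Suc n))) \<longlonglongrightarrow> d + 0"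
      by (intro tendsto_intros LIMSEQ_inverse_real_of_nat)
    show "\<exists>N. \<forall>n\<ge>N. (norm (x - f n))\<^sup>2 \<le> d + inverse (real (Suc n))"
      using f_close less_imp_le by blast
  qed
  then have "norm (x - s) \<le> norm (x - y)" if "y \<in> S" for y
    using d_le[OF that] by (simp add: power2_le_imp_le)
  with \<open>s \<in> S\<close> that show ?thesis by blast
qed

lemma subspace_nearest_point_orthogonal:
  assumes "subspace S" and "s \<in> S"
    and nearest: "\<And>y. y \<in> S \<Longrightarrow> norm (x - s) \<le> norm (x - y)"
  shows "x - s \<in> orthogonal_comp S"
  unfolding orthogonal_comp_def orthogonal_def
proof (intro CollectI ballI)
  fix y assume "y \<in> S"
  define u where "u = x - s"
  have "0 \<le> t\<^sup>2 * (y \<bullet> y) - 2 * t * (y \<bullet> u)" for t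
  proof -
    have "s + t *\<^sub>R y \<in> S"
      using assms(1,2) \<open>y \<in> S\<close> by (simp add: subspace_add subspace_scale)
    from nearest[OF this] have "(norm u)\<^sup>2 \<le> (norm (u - t *\<^sub>R y))\<^sup>2"
      by (simp add: u_def algebra_simps)
    then have "u \<bullet> u \<le> (u - t *\<^sub>R y) \<bullet> (u - t *\<^sub>R y)"
      by (simp only: power2_norm_eq_inner)
    then show ?thesis
      by (simp add: inner_diff_left inner_diff_right inner_commute
          power2_eq_square algebra_simps)
  qed
  \<comment> \<open>the quadratic in t is minimised at t = (y \<bullet> u) / (y \<bullet> y)\<close>
  from this[of "(y \<bullet> u) / (y \<bullet> y)"] have "(y \<bullet> u)\<^sup>2 / (y \<bullet> y) \<le> 0"
    by (cases "y = 0") (simp_all add: field_simps power2_eq_square)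
  then show "y \<bullet> (x - s) = 0"
    by (cases "y = 0") (auto simp: u_def divide_le_0_iff simp flip: inner_gt_zero_iff)
qed

lemma closed_subspace_orthogonal_decomposition:
  fixes S :: "'a::{real_inner,complete_space} set"
  assumes "subspace S" and "closed S"
  obtains s where "s \<in> S" and "x - s \<in> orthogonal_comp S"
proof -
  have "convex S" "S \<noteq> {}"
    using subspace_imp_convex subspace_0 assms(1) by auto
  with assms show ?thesis
    by (metis convex_nearest_point_exists subspace_nearest_point_orthogonal that)
qed

lemma closed_subspace_sum_orthogonal_comp:
  fixes S :: "'a::{real_inner,complete_space} set"
  assumes "subspace S" and "closed S"
  shows "{s + d | s d. s \<in> S \<and> d \<in> orthogonal_comp S} = UNIV"
proof -
  have "x \<in> {s + d | s d. s \<in> S \<and> d \<in> orthogonal_comp S}" for x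
  proof -
    obtain s where "s \<in> S" "x - s \<in> orthogonal_comp S"
      using closed_subspace_orthogonal_decomposition[OF assms] .
    moreover have "x = s + (x - s)"
      by simp
    ultimately show ?thesis
      by blast
  qed
  then show ?thesis
    by blast
qed

lemma
  assumes "ftvn S lam"
  shows ftvn_subspace: "subspace S"
    and ftvn_norm_eq: "x \<in> S \<Longrightarrow> norm (lam x) = norm x"
    and ftvn_inner_le: "x \<in> S \<Longrightarrow> y \<in> S \<Longrightarrow> x \<bullet> y \<le> lam x \<bullet> lam y"
    and ftvn_commuting_preimage:
      "c \<in> S \<Longrightarrow> q \<in> lam ` S \<Longrightarrow> \<exists>x\<in>S. lam x = q \<and> ftvn_commute lam c x"
  using assms unfolding ftvn_def ftvn_commute_def by blast+

lemma ftvn_inner_self: "ftvn S lam \<Longrightarrow> x \<in> S \<Longrightarrow> lam x \<bullet> lam x = x \<bullet> x"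
  by (metis ftvn_norm_eq power2_norm_eq_inner)

lemma ftvn_lambda_zero: "ftvn S lam \<Longrightarrow> lam 0 = 0"
  using ftvn_norm_eq ftvn_subspace subspace_0 by fastforce

lemma ftvn_norm_diff_le:
  assumes "ftvn S lam" and "x \<in> S" and "y \<in> S"
  shows "norm (lam x - lam y) \<le> norm (x - y)"
proof -
  have "(norm (lam x - lam y))\<^sup>2 = lam x \<bullet> lam x + lam y \<bullet> lam y - 2 * (lam x \<bullet> lam y)"
    by (simp add: power2_norm_eq_inner inner_diff_left inner_diff_right inner_commute)
  also have "\<dots> \<le> x \<bullet> x + y \<bullet> y - 2 * (x \<bullet> y)"
    using ftvn_inner_self ftvn_inner_le assms by fastforce
  also have "\<dots> = (norm (x - y))\<^sup>2"
    by (simp add: power2_norm_eq_inner inner_diff_left inner_diff_right inner_commute)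
  finally show ?thesis
    by (rule power2_le_imp_le) simp
qed

lemma ftvn_center_commute:
  "c \<in> ftvn_center S lam \<Longrightarrow> y \<in> S \<Longrightarrow> c \<bullet> y = lam c \<bullet> lam y"
  by (simp add: ftvn_center_def ftvn_commute_def)

lemma ftvn_center_UNIV_iff:
  "c \<in> ftvn_center UNIV lam \<longleftrightarrow> (\<forall>y. c \<bullet> y = lam c \<bullet> lam y)"
  by (simp add: ftvn_center_def ftvn_commute_def)

lemma ftvn_lambda_add_scaled_central:
  assumes ftvn: "ftvn S lam" and c: "c \<in> ftvn_center S lam" and "x \<in> S"
  shows "lam (x + t *\<^sub>R c) = lam x + t *\<^sub>R lam c"
proof -
  define u where "u = x + t *\<^sub>R c"
  have "c \<in> S"
    using c by (simp add: ftvn_center_def)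
  then have "u \<in> S"
    using \<open>x \<in> S\<close> ftvn_subspace[OF ftvn] by (simp add: u_def subspace_add subspace_scale)
  have self: "lam u \<bullet> lam u = u \<bullet> u" "lam x \<bullet> lam x = x \<bullet> x" "lam c \<bullet> lam c = c \<bullet> c"
    using ftvn_inner_self[OF ftvn] \<open>u \<in> S\<close> \<open>x \<in> S\<close> \<open>c \<in> S\<close> by blast+
  have central: "lam c \<bullet> lam u = c \<bullet> u" "lam c \<bullet> lam x = c \<bullet> x"
    using ftvn_center_commute[OF c] \<open>u \<in> S\<close> \<open>x \<in> S\<close> by simp_all
  have "(norm (lam u - lam x - t *\<^sub>R lam c))\<^sup>2
      = lam u \<bullet> lam u + lam x \<bullet> lam x + t\<^sup>2 * (lam c \<bullet> lam c)
        - 2 * (lam u \<bullet> lam x) - 2 * t * (lam c \<bullet> lam u) + 2 * t * (lam c \<bullet> lam x)"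
    unfolding power2_norm_eq_inner
    by (simp add: inner_diff_left inner_diff_right inner_commute power2_eq_square algebra_simps)
  also have "\<dots> \<le> u \<bullet> u + x \<bullet> x + t\<^sup>2 * (c \<bullet> c) - 2 * (u \<bullet> x) - 2 * t * (c \<bullet> u) + 2 * t * (c \<bullet> x)"
    unfolding self central using ftvn_inner_le[OF ftvn \<open>u \<in> S\<close> \<open>x \<in> S\<close>] by linarith
  also have "\<dots> = (norm (u - x - t *\<^sub>R c))\<^sup>2"
    unfolding power2_norm_eq_inner
    by (simp add: inner_diff_left inner_diff_right inner_commute power2_eq_square algebra_simps)
  also have "\<dots> = 0"
    by (simp add: u_def)
  finally show ?thesis
    by (simp add: u_def algebra_simps)
qed

lemma ftvn_center_subspace:
  assumes ftvn: "ftvn S lam"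
  shows "subspace (ftvn_center S lam)"
  unfolding subspace_def
proof (intro conjI ballI allI)
  show "0 \<in> ftvn_center S lam"
    using ftvn_lambda_zero[OF ftvn] ftvn_subspace[OF ftvn]
    by (simp add: ftvn_center_def ftvn_commute_def subspace_0)
next
  fix x y assume x: "x \<in> ftvn_center S lam" and y: "y \<in> ftvn_center S lam"
  then have "x \<in> S" "y \<in> S" "x + y \<in> S"
    using ftvn_subspace[OF ftvn] by (auto simp: ftvn_center_def subspace_add)
  moreover have "lam (x + y) = lam x + lam y"
    using ftvn_lambda_add_scaled_central[OF ftvn y \<open>x \<in> S\<close>, of 1] by simp
  ultimately show "x + y \<in> ftvn_center S lam"
    using ftvn_center_commute[OF x] ftvn_center_commute[OF y]
    by (simp add: ftvn_center_def ftvn_commute_def inner_add_left)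
next
  fix t :: real and x assume x: "x \<in> ftvn_center S lam"
  then have "x \<in> S" "t *\<^sub>R x \<in> S"
    using ftvn_subspace[OF ftvn] by (auto simp: ftvn_center_def subspace_scale)
  moreover have "lam (t *\<^sub>R x) = t *\<^sub>R lam x"
    using ftvn_lambda_add_scaled_central[OF ftvn x subspace_0[OF ftvn_subspace[OF ftvn]], of t]
    by (simp add: ftvn_lambda_zero[OF ftvn])
  ultimately show "t *\<^sub>R x \<in> ftvn_center S lam"
    using ftvn_center_commute[OF x] by (simp add: ftvn_center_def ftvn_commute_def)
qed

lemma ftvn_center_UNIV_closed:
  assumes ftvn: "ftvn UNIV lam"
  shows "closed (ftvn_center UNIV lam)"
proof -
  have "1-lipschitz_on UNIV lam"
    using ftvn_norm_diff_le[OF ftvn] by (intro lipschitz_onI) (simp_all add: dist_norm)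
  then have "continuous_on UNIV lam"
    by (rule lipschitz_on_continuous_on)
  moreover have "ftvn_center UNIV lam = (\<Inter>y. {x. x \<bullet> y = lam x \<bullet> lam y})"
    by (auto simp: ftvn_center_UNIV_iff)
  ultimately show ?thesis
    by (auto intro!: closed_INT closed_Collect_eq continuous_intros)
qed

lemma ftvn_lambda_eq_central:
  assumes ftvn: "ftvn S lam" and c: "c \<in> ftvn_center S lam" and "x \<in> S"
    and "lam x = lam c"
  shows "x = c"
proof -
  have "c \<in> S"
    using c by (simp add: ftvn_center_def)
  have "x \<bullet> x = c \<bullet> c" "c \<bullet> x = c \<bullet> c"
    using ftvn_inner_self[OF ftvn] ftvn_center_commute[OF c \<open>x \<in> S\<close>] \<open>x \<in> S\<close> \<open>c \<in> S\<close>
      \<open>lam x = lam c\<close> by metis+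
  then have "(norm (x - c))\<^sup>2 = 0"
    by (simp add: power2_norm_eq_inner inner_diff_left inner_diff_right inner_commute)
  then show ?thesis
    by simp
qed

lemma ftvn_subspaceI:
  assumes ftvn: "ftvn S lam" and "subspace T" and "T \<subseteq> S"
    and saturated: "\<And>x. x \<in> S \<Longrightarrow> lam x \<in> lam ` T \<Longrightarrow> x \<in> T"
  shows "ftvn T lam"
  unfolding ftvn_def
proof (intro conjI ballI)
  fix c q assume "c \<in> T" "q \<in> lam ` T"
  then obtain x where "x \<in> S" "lam x = q" "ftvn_commute lam c x"
    using ftvn_commuting_preimage[OF ftvn] \<open>T \<subseteq> S\<close> by blast
  with saturated \<open>q \<in> lam ` T\<close> show "\<exists>x\<in>T. lam x = q \<and> c \<bullet> x = lam c \<bullet> lam x"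
    by (auto simp: ftvn_commute_def)
qed (use ftvn_norm_eq[OF ftvn] ftvn_inner_le[OF ftvn] \<open>subspace T\<close> \<open>T \<subseteq> S\<close> in auto)

lemma ftvn_center_center: "ftvn_center (ftvn_center S lam) lam = ftvn_center S lam"
  by (auto simp: ftvn_center_def)

lemma ftvn_center_UNIV_decomposition:
  fixes lam :: "'v::{real_inner,complete_space} \<Rightarrow> 'w::real_inner"
  assumes "ftvn UNIV lam"
  obtains c where "c \<in> ftvn_center UNIV lam" and "x - c \<in> orthogonal_comp (ftvn_center UNIV lam)"
  using closed_subspace_orthogonal_decomposition ftvn_center_subspace ftvn_center_UNIV_closed assms
  by metis

lemma ftvn_lambda_preimage_orthogonal_comp_center:
  fixes lam :: "'v::{real_inner,complete_space} \<Rightarrow> 'w::real_inner"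
  defines "C \<equiv> ftvn_center UNIV lam"
  assumes ftvn: "ftvn UNIV lam" and "lam x \<in> lam ` orthogonal_comp C"
  shows "x \<in> orthogonal_comp C"
proof -
  obtain z where z: "z \<in> orthogonal_comp C" "lam z = lam x"
    using assms(3) by auto
  obtain c where c: "c \<in> C" "x - c \<in> orthogonal_comp C"
    using ftvn_center_UNIV_decomposition[OF ftvn] unfolding C_def by blast
  have "c \<bullet> c = c \<bullet> x"
    using c by (simp add: orthogonal_comp_def orthogonal_def inner_diff_right)
  also have "\<dots> = lam c \<bullet> lam z"
    using c(1) z(2) by (simp add: C_def ftvn_center_UNIV_iff)
  also have "\<dots> = c \<bullet> z"
    using c(1) by (simp add: C_def ftvn_center_UNIV_iff)
  also have "\<dots> = 0"
    using c(1) z(1) by (simp add: orthogonal_comp_def orthogonal_def)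
  finally show ?thesis
    using c by simp
qed

lemma ftvn_center_orthogonal_comp_center:
  fixes lam :: "'v::{real_inner,complete_space} \<Rightarrow> 'w::real_inner"
  defines "C \<equiv> ftvn_center UNIV lam"
  assumes ftvn: "ftvn UNIV lam"
  shows "ftvn_center (orthogonal_comp C) lam = {0}"
proof
  show "{0} \<subseteq> ftvn_center (orthogonal_comp C) lam"
    using ftvn_lambda_zero[OF ftvn]
    by (simp add: ftvn_center_def ftvn_commute_def subspace_0 subspace_orthogonal_comp)
next
  have "x \<in> C" if x: "x \<in> ftvn_center (orthogonal_comp C) lam" for x
    unfolding C_def ftvn_center_UNIV_iff
  proof
    fix y
    obtain c where c: "c \<in> C" and d: "y - c \<in> orthogonal_comp C"
      using ftvn_center_UNIV_decomposition[OF ftvn] unfolding C_def by blast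
    have "x \<in> orthogonal_comp C"
      using x by (simp add: ftvn_center_def)
    have "lam y = lam (y - c) + lam c"
      using ftvn_lambda_add_scaled_central[OF ftvn c[unfolded C_def], of "y - c" 1] by simp
    moreover have "x \<bullet> (y - c) = lam x \<bullet> lam (y - c)"
      using ftvn_center_commute[OF x d] .
    moreover have "x \<bullet> c = 0" "lam x \<bullet> lam c = 0"
      using c \<open>x \<in> orthogonal_comp C\<close> ftvn_center_commute[of c UNIV lam x]
      by (auto simp: C_def orthogonal_comp_def orthogonal_def inner_commute)
    ultimately show "x \<bullet> y = lam x \<bullet> lam y"
      by (simp add: inner_add_right inner_diff_right)
  qed
  then show "ftvn_center (orthogonal_comp C) lam \<subseteq> {0}"
    using orthogonal_Int_0[OF ftvn_center_subspace[OF ftvn]]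
    by (auto simp: C_def ftvn_center_def)
qed

theorem theorem6p6:
  fixes lam :: "'v::{real_inner,complete_space} \<Rightarrow> 'w::real_inner"
  assumes "ftvn UNIV lam"
  shows "UNIV = {c + d | c d. c \<in> ftvn_center UNIV lam \<and> d \<in> orthogonal_comp (ftvn_center UNIV lam)}
         \<and> ftvn (ftvn_center UNIV lam) lam \<and> ftvn_center (ftvn_center UNIV lam) lam = ftvn_center UNIV lam
         \<and> ftvn (orthogonal_comp (ftvn_center UNIV lam)) lam
         \<and> ftvn_center (orthogonal_comp (ftvn_center UNIV lam)) lam = {0}"
proof (intro conjI)
  let ?C = "ftvn_center UNIV lam"
  show "UNIV = {c + d | c d. c \<in> ?C \<and> d \<in> orthogonal_comp ?C}"
    using closed_subspace_sum_orthogonal_comp[OF ftvn_center_subspace[OF assms]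
        ftvn_center_UNIV_closed[OF assms]] by simp
  show "ftvn ?C lam"
    using ftvn_lambda_eq_central[OF assms]
    by (intro ftvn_subspaceI[OF assms] ftvn_center_subspace[OF assms]) blast+
  show "ftvn_center ?C lam = ?C"
    by (rule ftvn_center_center)
  show "ftvn (orthogonal_comp ?C) lam"
    using ftvn_lambda_preimage_orthogonal_comp_center[OF assms]
    by (intro ftvn_subspaceI[OF assms] subspace_orthogonal_comp) blast+
  show "ftvn_center (orthogonal_comp ?C) lam = {0}"
    using ftvn_center_orthogonal_comp_center[OF assms] .
qed

end
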